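(* (1) Let $a_n=\sum_{k=0}^n\binom{n}{k}^2\binom{n+k}{k}$. Then for every prime $p$ and every integer $n$ with $0\le n\le p-1$, $$a_n\equiv(-1)^na_{p-1-n}\pmod{p}.$$ (2) Let $b_n=\sum_{k=0}^n\binom{n}{k}^2\binom{2k}{k}$. Then for every prime $p>3$ and every integer $n$ with $0\le n\le p-1$, $$b_n\equiv\left(\frac{-3}{p}\right)9^nb_{p-1-n}\pmod{p},$$ where $\left(\frac{-3}{p}\right)$ is the Legendre symbol. *)

theory Defs
  imports "HOL-Number_Theory.Number_Theory"
begin

definition apery_a :: "nat \<Rightarrow> int" where
  "apery_a n = (\<Sum>k=0..n. int (n choose k) ^ 2 * int ((n + k) choose k))"

definition seq_b :: "nat \<Rightarrow> int" where
  "seq_b n = (\<Sum>k=0..n. int (n choose k) ^ 2 * int ((2 * k) choose k))"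

end

theory Submission
  imports Defs
begin

(*
  Both sequences satisfy Apery-like recurrences
    (n+1)^2 u(n+1) = (alpha n (n+1) + beta) u(n) + gamma n^2 u(n-1),
  with (alpha, beta, gamma) = (11, 3, 1) for a and (10, 3, -9) for b, proved by creative
  telescoping. Modulo p the substitution n |-> p - 1 - n = -1 - n fixes n (n+1) and swaps n^2
  with (n+1)^2, so (-gamma)^n u(p-1-n) satisfies the same recurrence mod p. Since (n+1)^2 is
  invertible mod p for n + 1 < p, a solution mod p is determined by its initial value, and it
  remains to compare u(0) = 1 with u(p-1). Here a(p-1) = 1 mod p because p divides
  C(p-1+k, k) for 0 < k < p; and with h = (p-1)/2 the congruences C(p-1, k) = (-1)^k and
  C(2k, k) = (-4)^k C(h, k) give b(p-1) = (1 - 4)^h = (-3/p) mod p by Euler's criterion.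
*)

lemma binomial_Suc_absorb_comp_int:
  "(int n + 1 - int k) * int (Suc n choose k) = (int n + 1) * int (n choose k)"
proof (cases "k \<le> Suc n")
  case True
  have "int ((Suc n - k) * (Suc n choose k)) = int (Suc n * (n choose k))"
    using binomial_absorb_comp[of "Suc n" k] by simp
  then show ?thesis
    using True by (simp only: of_nat_mult of_nat_diff) (simp add: ac_simps)
qed (simp add: binomial_eq_0)

lemma Suc_times_binomial_int:
  "(int k + 1) * int (Suc n choose Suc k) = (int n + 1) * int (n choose k)"
  using arg_cong[OF Suc_times_binomial[of k n], of int] by (simp add: algebra_simps)

lemma Suc_times_binomial_eq_diff_int:
  "(int k + 1) * int (n choose Suc k) = (int n - int k) * int (n choose k)"
proof (cases n)
  case (Suc m)
  then show ?thesis
    using Suc_times_binomial_int[of k m] binomial_Suc_absorb_comp_int[of m k]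
    by (simp del: binomial_Suc_Suc add: algebra_simps)
qed (cases k, simp_all)

lemma binomial_neighbours_scaled:
  fixes n k :: nat
  defines "u \<equiv> int (n + 2 choose k)"
  shows "(int n + 2) * int (n + 1 choose k) = (int n + 2 - int k) * u"
    and "(int n + 1) * (int n + 2) * int (n choose k) = (int n + 1 - int k) * (int n + 2 - int k) * u"
    and "(int k + 1) * int (n + 2 choose k + 1) = (int n + 2 - int k) * u"
proof -
  show top: "(int n + 2) * int (n + 1 choose k) = (int n + 2 - int k) * u"
    using binomial_Suc_absorb_comp_int[of "n + 1" k] unfolding u_def by (simp add: add_ac)
  have "(int n + 1) * (int n + 2) * int (n choose k) = (int n + 2) * ((int n + 1 - int k) * int (n + 1 choose k))"
    using binomial_Suc_absorb_comp_int[of n k] by simp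
  also have "\<dots> = (int n + 1 - int k) * ((int n + 2) * int (n + 1 choose k))"
    by (simp only: mult_ac)
  finally show "(int n + 1) * (int n + 2) * int (n choose k) = (int n + 1 - int k) * (int n + 2 - int k) * u"
    unfolding top by (simp only: mult_ac)
  show "(int k + 1) * int (n + 2 choose k + 1) = (int n + 2 - int k) * u"
    using Suc_times_binomial_int[of k "n + 1"] unfolding top[symmetric]
    by (simp del: binomial_Suc_Suc add: ac_simps)
qed

lemma central_binomial_Suc_int:
  "(int k + 1) * int (2 * Suc k choose Suc k) = 2 * (2 * int k + 1) * int (2 * k choose k)"
proof -
  have "(int k + 1) * int (2 * Suc k choose Suc k) = 2 * ((int k + 1) * int (Suc (2 * k) choose k))"
    using Suc_times_binomial_int[of k "Suc (2 * k)"] by (simp del: binomial_Suc_Suc add: algebra_simps)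
  also have "(int k + 1) * int (Suc (2 * k) choose k) = (2 * int k + 1) * int (2 * k choose k)"
    using binomial_Suc_absorb_comp_int[of "2 * k" k] by simp
  finally show ?thesis
    by simp
qed

lemma certificate_by_ratios:
  fixes s :: "'a::comm_ring"
  assumes "d * F2 = r2 * s" and "d * F1 = r1 * s" and "d * F0 = r0 * s"
    and "G1 = q1 * s" and "G0 = q0 * s"
    and "c2 * r2 + c1 * r1 + c0 * r0 = q1 - q0"
  shows "d * (c2 * F2 + c1 * F1 + c0 * F0) = G1 - G0"
proof -
  have "d * (c2 * F2 + c1 * F1 + c0 * F0) = c2 * (d * F2) + c1 * (d * F1) + c0 * (d * F0)"
    by (simp add: algebra_simps)
  also have "\<dots> = (c2 * r2 + c1 * r1 + c0 * r0) * s"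
    using assms(1-3) by (simp add: algebra_simps)
  also have "\<dots> = (q1 - q0) * s"
    by (simp only: assms(6))
  also have "\<dots> = G1 - G0"
    using assms(4,5) by (simp add: algebra_simps)
  finally show ?thesis .
qed

lemma recurrence_by_telescoping:
  fixes F :: "nat \<Rightarrow> nat \<Rightarrow> 'a::idom"
  assumes vanish: "\<And>m k. m < k \<Longrightarrow> F m k = 0"
    and certificate: "\<And>k. d * (c2 * F (n + 2) k + c1 * F (n + 1) k + c0 * F n k) = G (Suc k) - G k"
    and "G 0 = 0" and "G (n + 3) = 0" and "d \<noteq> 0"
  shows "c2 * (\<Sum>k=0..n+2. F (n + 2) k) + c1 * (\<Sum>k=0..n+1. F (n + 1) k) + c0 * (\<Sum>k=0..n. F n k) = 0"
proof -
  have extend: "(\<Sum>k=0..m. F m k) = (\<Sum>k<n+3. F m k)" if "m \<le> n + 2" for m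
    using that by (intro sum.mono_neutral_left) (auto intro: vanish)
  have sums: "(\<Sum>k=0..n+2. F (n + 2) k) = (\<Sum>k<n+3. F (n + 2) k)"
    "(\<Sum>k=0..n+1. F (n + 1) k) = (\<Sum>k<n+3. F (n + 1) k)"
    "(\<Sum>k=0..n. F n k) = (\<Sum>k<n+3. F n k)"
    by (rule extend; simp)+
  have "d * (c2 * (\<Sum>k=0..n+2. F (n + 2) k) + c1 * (\<Sum>k=0..n+1. F (n + 1) k) + c0 * (\<Sum>k=0..n. F n k))
      = (\<Sum>k<n+3. d * (c2 * F (n + 2) k + c1 * F (n + 1) k + c0 * F n k))"
    unfolding sums by (simp add: sum_distrib_left sum.distrib algebra_simps)
  also have "\<dots> = (\<Sum>k<n+3. G (Suc k) - G k)"
    using certificate by simp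
  also have "\<dots> = 0"
    using assms(3,4) by (simp add: sum_lessThan_telescope)
  finally show ?thesis
    using \<open>d \<noteq> 0\<close> by simp
qed

(* At n = 0 the truncated index n - 1 is harmless: its coefficient is gamma * 0. *)

definition apery_like :: "int \<Rightarrow> int \<Rightarrow> int \<Rightarrow> (nat \<Rightarrow> int) \<Rightarrow> bool" where
  "apery_like \<alpha> \<beta> \<gamma> x \<longleftrightarrow> (\<forall>n. (int n + 1)^2 * x (Suc n)
     = (\<alpha> * int n * (int n + 1) + \<beta>) * x n + \<gamma> * int n ^ 2 * x (n - 1))"

lemma apery_likeI:
  assumes "x 1 = \<beta> * x 0"
    and "\<And>n. (int n + 2)^2 * x (n + 2)
      = (\<alpha> * (int n + 1) * (int n + 2) + \<beta>) * x (n + 1) + \<gamma> * (int n + 1)^2 * x n"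
  shows "apery_like \<alpha> \<beta> \<gamma> x"
  unfolding apery_like_def
proof
  fix n
  show "(int n + 1)^2 * x (Suc n) = (\<alpha> * int n * (int n + 1) + \<beta>) * x n + \<gamma> * int n ^ 2 * x (n - 1)"
  proof (cases n)
    case (Suc m)
    then show ?thesis
      using assms(2)[of m] by (simp add: algebra_simps)
  qed (use assms(1) in simp)
qed

(* The certificate polynomials below were found by Zeilberger's algorithm. *)

definition apery_a_cert_poly :: "int \<Rightarrow> int \<Rightarrow> int" where
  "apery_a_cert_poly n k = -30 + 7*k + k^2 - 67*n + 13*n*k + n*k^2 - 48*n^2 + 6*n^2*k - 11*n^3"

lemma apery_a_telescoping:
  fixes n k :: nat
  defines "F m j \<equiv> int (m choose j)^2 * int (m + j choose j)"
    and "G j \<equiv> int j ^ 3 * apery_a_cert_poly (int n) (int j) * int (n + 2 choose j)^2 * int (n + j choose j)"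
  shows "((int n + 1) * (int n + 2))^2 * ((int n + 2)^2 * F (n + 2) k
      + - (11 * (int n + 1) * (int n + 2) + 3) * F (n + 1) k + - ((int n + 1)^2) * F n k)
    = G (Suc k) - G k"
proof (rule certificate_by_ratios)
  define N K where "N = int n" and "K = int k"
  define u v where "u = int (n + 2 choose k)" and "v = int (n + k choose k)"
  note row = binomial_neighbours_scaled[where n = n and k = k, folded u_def N_def K_def]
  have col1: "(N + 1) * int (n + 1 + k choose k) = (N + K + 1) * v"
    using binomial_Suc_absorb_comp_int[of "n + k" k] unfolding v_def N_def K_def by (simp add: add_ac)
  have col2: "(N + 1) * (N + 2) * int (n + 2 + k choose k) = (N + K + 1) * (N + K + 2) * v"
    using binomial_Suc_absorb_comp_int[of "n + 1 + k" k] col1 unfolding N_def K_def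
    by (simp add: add_ac) (metis mult.commute mult.left_commute)
  have col3: "(K + 1) * int (n + k + 1 choose k + 1) = (N + K + 1) * v"
    using Suc_times_binomial_int[of k "n + k"] unfolding v_def N_def K_def by (simp add: add_ac)
  have "((N + 1) * (N + 2))^2 * F (n + 2) k
      = (N + 1) * (N + 2) * u^2 * ((N + 1) * (N + 2) * int (n + 2 + k choose k))"
    unfolding F_def u_def by (simp add: power2_eq_square ac_simps)
  also have "\<dots> = ((N + 1) * (N + 2) * (N + K + 1) * (N + K + 2)) * (u^2 * v)"
    unfolding col2 by (simp add: ac_simps)
  finally show "((N + 1) * (N + 2))^2 * F (n + 2) k = \<dots>" .
  have "((N + 1) * (N + 2))^2 * F (n + 1) k
      = (N + 1) * ((N + 2) * int (n + 1 choose k))^2 * ((N + 1) * int (n + 1 + k choose k))"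
    unfolding F_def N_def by (simp add: power2_eq_square ac_simps)
  also have "\<dots> = ((N + 1) * (N + 2 - K)^2 * (N + K + 1)) * (u^2 * v)"
    unfolding row(1) col1 by (simp add: power_mult_distrib ac_simps)
  finally show "((N + 1) * (N + 2))^2 * F (n + 1) k = \<dots>" .
  have "((N + 1) * (N + 2))^2 * F n k = ((N + 1) * (N + 2) * int (n choose k))^2 * v"
    unfolding F_def N_def v_def by (simp add: power_mult_distrib)
  also have "\<dots> = ((N + 1 - K)^2 * (N + 2 - K)^2) * (u^2 * v)"
    unfolding row(2) by (simp add: power_mult_distrib ac_simps)
  finally show "((N + 1) * (N + 2))^2 * F n k = \<dots>" .
  have "G (Suc k) = apery_a_cert_poly N (K + 1)
      * ((K + 1) * int (n + 2 choose k + 1))^2 * ((K + 1) * int (n + k + 1 choose k + 1))"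
    unfolding G_def N_def K_def
    by (simp del: binomial_Suc_Suc add: power_mult_distrib power3_eq_cube power2_eq_square ac_simps)
  also have "\<dots> = (apery_a_cert_poly N (K + 1) * (N + 2 - K)^2 * (N + K + 1)) * (u^2 * v)"
    unfolding row(3) col3 by (simp add: power_mult_distrib ac_simps)
  finally show "G (Suc k) = \<dots>" .
  show "G k = (K^3 * apery_a_cert_poly N K) * (u^2 * v)"
    unfolding G_def u_def v_def N_def K_def by (simp add: ac_simps)
  show "(N + 2)^2 * ((N + 1) * (N + 2) * (N + K + 1) * (N + K + 2))
      + - (11 * (N + 1) * (N + 2) + 3) * ((N + 1) * (N + 2 - K)^2 * (N + K + 1))
      + - ((N + 1)^2) * ((N + 1 - K)^2 * (N + 2 - K)^2)
    = apery_a_cert_poly N (K + 1) * (N + 2 - K)^2 * (N + K + 1) - K^3 * apery_a_cert_poly N K"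
    unfolding apery_a_cert_poly_def by (simp add: algebra_simps power2_eq_square power3_eq_cube)
qed

lemma apery_a_apery_like: "apery_like 11 3 1 apery_a"
proof (rule apery_likeI)
  show "apery_a 1 = 3 * apery_a 0"
    by (simp add: apery_a_def)
  fix n
  have "(int n + 2)^2 * apery_a (n + 2) + - (11 * (int n + 1) * (int n + 2) + 3) * apery_a (n + 1)
      + - ((int n + 1)^2) * apery_a n = 0"
    unfolding apery_a_def
    by (rule recurrence_by_telescoping[where F = "\<lambda>m j. int (m choose j)^2 * int (m + j choose j)"
      and G = "\<lambda>j. int j ^ 3 * apery_a_cert_poly (int n) (int j) * int (n + 2 choose j)^2 * int (n + j choose j)",
      OF _ apery_a_telescoping]) (simp_all add: binomial_eq_0)
  then show "(int n + 2)^2 * apery_a (n + 2)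
      = (11 * (int n + 1) * (int n + 2) + 3) * apery_a (n + 1) + 1 * (int n + 1)^2 * apery_a n"
    by (simp add: algebra_simps)
qed

definition seq_b_cert_poly :: "int \<Rightarrow> int \<Rightarrow> int" where
  "seq_b_cert_poly n k = -8 + 3*k - 20*n + 6*n*k - 16*n^2 + 3*n^2*k - 4*n^3"

lemma seq_b_telescoping:
  fixes n k :: nat
  defines "F m j \<equiv> int (m choose j)^2 * int (2 * j choose j)"
    and "G j \<equiv> int j ^ 3 * seq_b_cert_poly (int n) (int j) * int (n + 2 choose j)^2 * int (2 * j choose j)"
  shows "((int n + 1) * (int n + 2))^2 * ((int n + 2)^2 * F (n + 2) k
      + - (10 * (int n + 1) * (int n + 2) + 3) * F (n + 1) k + 9 * (int n + 1)^2 * F n k)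
    = G (Suc k) - G k"
proof (rule certificate_by_ratios)
  define N K where "N = int n" and "K = int k"
  define u c where "u = int (n + 2 choose k)" and "c = int (2 * k choose k)"
  note row = binomial_neighbours_scaled[where n = n and k = k, folded u_def N_def K_def]
  show "((N + 1) * (N + 2))^2 * F (n + 2) k = ((N + 1)^2 * (N + 2)^2) * (u^2 * c)"
    unfolding F_def u_def c_def by (simp add: power_mult_distrib ac_simps)
  have "((N + 1) * (N + 2))^2 * F (n + 1) k = (N + 1)^2 * ((N + 2) * int (n + 1 choose k))^2 * c"
    unfolding F_def N_def c_def by (simp add: power_mult_distrib ac_simps)
  also have "\<dots> = ((N + 1)^2 * (N + 2 - K)^2) * (u^2 * c)"
    unfolding row(1) by (simp add: power_mult_distrib ac_simps)
  finally show "((N + 1) * (N + 2))^2 * F (n + 1) k = \<dots>" .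
  have "((N + 1) * (N + 2))^2 * F n k = ((N + 1) * (N + 2) * int (n choose k))^2 * c"
    unfolding F_def N_def c_def by (simp add: power_mult_distrib)
  also have "\<dots> = ((N + 1 - K)^2 * (N + 2 - K)^2) * (u^2 * c)"
    unfolding row(2) by (simp add: power_mult_distrib ac_simps)
  finally show "((N + 1) * (N + 2))^2 * F n k = \<dots>" .
  have "G (Suc k) = seq_b_cert_poly N (K + 1)
      * ((K + 1) * int (n + 2 choose k + 1))^2 * ((K + 1) * int (2 * Suc k choose Suc k))"
    unfolding G_def N_def K_def
    by (simp del: binomial_Suc_Suc add: power_mult_distrib power3_eq_cube power2_eq_square ac_simps)
  also have "\<dots> = (seq_b_cert_poly N (K + 1) * (N + 2 - K)^2 * (2 * (2 * K + 1))) * (u^2 * c)"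
    unfolding row(3) central_binomial_Suc_int[of k, folded K_def c_def]
    by (simp add: power_mult_distrib ac_simps)
  finally show "G (Suc k) = \<dots>" .
  show "G k = (K^3 * seq_b_cert_poly N K) * (u^2 * c)"
    unfolding G_def u_def c_def N_def K_def by (simp add: ac_simps)
  show "(N + 2)^2 * ((N + 1)^2 * (N + 2)^2)
      + - (10 * (N + 1) * (N + 2) + 3) * ((N + 1)^2 * (N + 2 - K)^2)
      + 9 * (N + 1)^2 * ((N + 1 - K)^2 * (N + 2 - K)^2)
    = seq_b_cert_poly N (K + 1) * (N + 2 - K)^2 * (2 * (2 * K + 1)) - K^3 * seq_b_cert_poly N K"
    unfolding seq_b_cert_poly_def by (simp add: algebra_simps power2_eq_square power3_eq_cube)
qed

lemma seq_b_apery_like: "apery_like 10 3 (-9) seq_b"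
proof (rule apery_likeI)
  show "seq_b 1 = 3 * seq_b 0"
    by (simp add: seq_b_def)
  fix n
  have "(int n + 2)^2 * seq_b (n + 2) + - (10 * (int n + 1) * (int n + 2) + 3) * seq_b (n + 1)
      + 9 * (int n + 1)^2 * seq_b n = 0"
    unfolding seq_b_def
    by (rule recurrence_by_telescoping[where F = "\<lambda>m j. int (m choose j)^2 * int (2 * j choose j)"
      and G = "\<lambda>j. int j ^ 3 * seq_b_cert_poly (int n) (int j) * int (n + 2 choose j)^2 * int (2 * j choose j)",
      OF _ seq_b_telescoping]) (simp_all add: binomial_eq_0)
  then show "(int n + 2)^2 * seq_b (n + 2)
      = (10 * (int n + 1) * (int n + 2) + 3) * seq_b (n + 1) + -9 * (int n + 1)^2 * seq_b n"
    by (simp add: algebra_simps)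
qed

definition apery_like_mod :: "nat \<Rightarrow> int \<Rightarrow> int \<Rightarrow> int \<Rightarrow> (nat \<Rightarrow> int) \<Rightarrow> bool" where
  "apery_like_mod p \<alpha> \<beta> \<gamma> x \<longleftrightarrow> (\<forall>n. Suc n < p \<longrightarrow> [(int n + 1)^2 * x (Suc n)
     = (\<alpha> * int n * (int n + 1) + \<beta>) * x n + \<gamma> * int n ^ 2 * x (n - 1)] (mod int p))"

lemma apery_like_imp_mod: "apery_like \<alpha> \<beta> \<gamma> x \<Longrightarrow> apery_like_mod p \<alpha> \<beta> \<gamma> x"
  unfolding apery_like_def apery_like_mod_def by simp

lemma apery_like_reflected_recurrence_cong:
  assumes rec: "apery_like \<alpha> \<beta> \<gamma> x" and m: "Suc m < p"
  defines "j \<equiv> p - 1 - m"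
  shows "[int m ^ 2 * x (Suc j) = (\<alpha> * int m * (int m + 1) + \<beta>) * x j + \<gamma> * (int m + 1)^2 * x (j - 1)] (mod int p)"
proof -
  have refl1: "[int j + 1 = - int m] (mod int p)" and refl2: "[int j = - (int m + 1)] (mod int p)"
    using m unfolding j_def cong_iff_dvd_diff by (simp_all add: of_nat_diff)
  have "[int m ^ 2 * x (Suc j) = (int j + 1)^2 * x (Suc j)] (mod int p)"
    using cong_pow[OF refl1, of 2] by (intro cong_mult cong_refl) (simp add: cong_sym)
  also have "(int j + 1)^2 * x (Suc j) = (\<alpha> * int j * (int j + 1) + \<beta>) * x j + \<gamma> * int j ^ 2 * x (j - 1)"
    using rec unfolding apery_like_def by simp
  also have "[\<dots> = (\<alpha> * int m * (int m + 1) + \<beta>) * x j + \<gamma> * (int m + 1)^2 * x (j - 1)] (mod int p)"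
  proof -
    have "[int j * (int j + 1) = int m * (int m + 1)] (mod int p)"
      using cong_mult[OF refl2 refl1] by (simp add: algebra_simps)
    then have coeff: "[\<alpha> * int j * (int j + 1) + \<beta> = \<alpha> * int m * (int m + 1) + \<beta>] (mod int p)"
      unfolding mult.assoc by (intro cong_add cong_scalar_left cong_refl)
    have square: "[int j ^ 2 = (int m + 1)^2] (mod int p)"
      using cong_pow[OF refl2, of 2] by (simp only: power2_minus)
    show ?thesis
      by (rule cong_add[OF cong_mult[OF coeff cong_refl] cong_mult[OF cong_mult[OF cong_refl square] cong_refl]])
  qed
  finally show ?thesis .
qed

lemma apery_like_mod_reversed:
  assumes rec: "apery_like \<alpha> \<beta> \<gamma> x"
  shows "apery_like_mod p \<alpha> \<beta> \<gamma> (\<lambda>m. e * (- \<gamma>)^m * x (p - 1 - m))"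
  unfolding apery_like_mod_def
proof (intro allI impI)
  fix m assume m: "Suc m < p"
  define j E where "j = p - 1 - m" and "E = e * (- \<gamma>)^m"
  have shift: "p - 1 - Suc m = j - 1"
    unfolding j_def by simp
  have prev: "\<gamma> * int m ^ 2 * (e * (- \<gamma>)^(m - 1) * x (p - 1 - (m - 1))) = - (E * (int m ^ 2 * x (Suc j)))"
  proof (cases m)
    case (Suc i)
    then have "p - 1 - (m - 1) = Suc j"
      using m unfolding j_def by simp
    then show ?thesis
      unfolding E_def Suc by (simp add: algebra_simps)
  qed simp
  have "int p dvd int m ^ 2 * x (Suc j) - ((\<alpha> * int m * (int m + 1) + \<beta>) * x j + \<gamma> * (int m + 1)^2 * x (j - 1))"
    using apery_like_reflected_recurrence_cong[OF rec m] unfolding j_def cong_iff_dvd_diff by (simp add: cong_sym_eq)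
  then have "int p dvd E * (int m ^ 2 * x (Suc j) - ((\<alpha> * int m * (int m + 1) + \<beta>) * x j + \<gamma> * (int m + 1)^2 * x (j - 1)))"
    by simp
  then show "[(int m + 1)^2 * (e * (- \<gamma>)^Suc m * x (p - 1 - Suc m))
      = (\<alpha> * int m * (int m + 1) + \<beta>) * (e * (- \<gamma>)^m * x (p - 1 - m))
        + \<gamma> * int m ^ 2 * (e * (- \<gamma>)^(m - 1) * x (p - 1 - (m - 1)))] (mod int p)"
    unfolding cong_iff_dvd_diff shift prev j_def[symmetric]
    by (simp add: E_def algebra_simps)
qed

lemma coprime_Suc_prime_int:
  assumes "prime p" and "Suc m < p"
  shows "coprime (int m + 1) (int p)"
proof -
  have "\<not> int p dvd int m + 1"
    using assms(2) by (auto dest: zdvd_imp_le)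
  then show ?thesis
    using assms(1) by (simp add: prime_imp_coprime coprime_commute)
qed

lemma apery_like_mod_unique:
  assumes p: "prime p"
    and x: "apery_like_mod p \<alpha> \<beta> \<gamma> x" and y: "apery_like_mod p \<alpha> \<beta> \<gamma> y"
    and start: "[x 0 = y 0] (mod int p)"
  shows "n < p \<Longrightarrow> [x n = y n] (mod int p)"
proof (induction n rule: less_induct)
  case (less n)
  show ?case
  proof (cases n)
    case (Suc m)
    have "[(int m + 1)^2 * x (Suc m) = (\<alpha> * int m * (int m + 1) + \<beta>) * x m + \<gamma> * int m ^ 2 * x (m - 1)] (mod int p)"
      using x less.prems unfolding apery_like_mod_def Suc by blast
    also have "[(\<alpha> * int m * (int m + 1) + \<beta>) * x m + \<gamma> * int m ^ 2 * x (m - 1)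
        = (\<alpha> * int m * (int m + 1) + \<beta>) * y m + \<gamma> * int m ^ 2 * y (m - 1)] (mod int p)"
      using less.IH less.prems unfolding Suc by (intro cong_add cong_mult cong_refl) simp_all
    also have "[(\<alpha> * int m * (int m + 1) + \<beta>) * y m + \<gamma> * int m ^ 2 * y (m - 1)
        = (int m + 1)^2 * y (Suc m)] (mod int p)"
      using y less.prems unfolding apery_like_mod_def Suc by (blast intro: cong_sym)
    finally have "[(int m + 1)^2 * x (Suc m) = (int m + 1)^2 * y (Suc m)] (mod int p)" .
    moreover have "coprime ((int m + 1)^2) (int p)"
      using coprime_Suc_prime_int[OF p] less.prems unfolding Suc by simp
    ultimately show ?thesis
      unfolding Suc by (simp add: cong_mult_lcancel)
  qed (use start in simp)
qed

theorem apery_like_reflection_cong: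
  assumes p: "prime p" and rec: "apery_like \<alpha> \<beta> \<gamma> x"
    and start: "[x 0 = e * x (p - 1)] (mod int p)" and n: "n < p"
  shows "[x n = e * (- \<gamma>)^n * x (p - 1 - n)] (mod int p)"
  using apery_like_mod_unique[OF p apery_like_imp_mod[OF rec] apery_like_mod_reversed[OF rec] _ n] start
  by simp

lemma prime_dvd_binomial:
  assumes p: "prime p" and "k < p" and "n - k < p" and "p \<le> n"
  shows "p dvd n choose k"
proof -
  have "fact k * fact (n - k) * (n choose k) = (fact n :: nat)"
    using assms by (intro binomial_fact_lemma) simp
  moreover have "p dvd (fact n :: nat)" and "\<not> p dvd (fact k :: nat)" and "\<not> p dvd (fact (n - k) :: nat)"
    using assms by (simp_all add: prime_dvd_fact_iff)
  ultimately show ?thesis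
    using p by (metis prime_dvd_mult_iff)
qed

lemma apery_a_pred_prime_cong:
  assumes p: "prime p"
  shows "[apery_a (p - 1) = 1] (mod int p)"
proof -
  have "apery_a (p - 1) = 1 + (\<Sum>k=1..p-1. int (p - 1 choose k)^2 * int (p - 1 + k choose k))"
    unfolding apery_a_def by (simp add: sum.atLeast_Suc_atMost)
  moreover have "int p dvd (\<Sum>k=1..p-1. int (p - 1 choose k)^2 * int (p - 1 + k choose k))"
  proof (intro dvd_sum dvd_mult)
    fix k assume "k \<in> {1..p-1}"
    then have "p dvd (p - 1 + k choose k)"
      using prime_gt_1_nat[OF p] by (intro prime_dvd_binomial[OF p]) auto
    then show "int p dvd int (p - 1 + k choose k)"
      by simp
  qed
  ultimately show ?thesis
    unfolding cong_iff_dvd_diff by simp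
qed

lemma binomial_pred_prime_cong:
  assumes p: "prime p"
  shows "k < p \<Longrightarrow> [int (p - 1 choose k) = (-1)^k] (mod int p)"
proof (induction k)
  case (Suc k)
  have "p choose Suc k = (p - 1 choose k) + (p - 1 choose Suc k)"
    using prime_gt_1_nat[OF p] binomial_Suc_Suc[of "p - 1" k] by simp
  moreover have "p dvd p choose Suc k"
    using Suc.prems p by (intro dvd_choose_prime) auto
  ultimately have "[int (p - 1 choose Suc k) = - int (p - 1 choose k)] (mod int p)"
    unfolding cong_iff_dvd_diff by (metis diff_minus_eq_add add.commute of_nat_add of_nat_dvd_iff)
  also have "[- int (p - 1 choose k) = - ((-1)^k)] (mod int p)"
    using Suc by (simp add: cong_minus_minus_iff)
  finally show ?case
    by simp
qed simp

lemma central_binomial_cong: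
  assumes p: "prime p" and "odd p"
  shows "k < p \<Longrightarrow> [int (2 * k choose k) = (-4)^k * int ((p - 1) div 2 choose k)] (mod int p)"
proof (induction k)
  case (Suc k)
  define h where "h = (p - 1) div 2"
  have ph: "int p = 2 * int h + 1"
    using \<open>odd p\<close> unfolding h_def by (auto elim!: oddE)
  have "(int k + 1) * int (2 * Suc k choose Suc k) = 2 * (2 * int k + 1) * int (2 * k choose k)"
    by (rule central_binomial_Suc_int)
  also have "[\<dots> = 2 * (2 * int k + 1) * ((-4)^k * int (h choose k))] (mod int p)"
    using Suc unfolding h_def by (intro cong_mult cong_refl) simp
  also have "[2 * (2 * int k + 1) * ((-4)^k * int (h choose k))
      = (-4)^Suc k * ((int h - int k) * int (h choose k))] (mod int p)"
  proof -
    have "2 * (2 * int k + 1) * ((-4)^k * int (h choose k)) - (-4)^Suc k * ((int h - int k) * int (h choose k))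
        = int p * (2 * (-4)^k * int (h choose k))"
      unfolding ph by (simp add: algebra_simps)
    then show ?thesis
      unfolding cong_iff_dvd_diff by simp
  qed
  also have "(-4)^Suc k * ((int h - int k) * int (h choose k)) = (int k + 1) * ((-4)^Suc k * int (h choose Suc k))"
    unfolding Suc_times_binomial_eq_diff_int[symmetric] by (simp only: mult_ac)
  finally have eq: "[(int k + 1) * int (2 * Suc k choose Suc k) = (int k + 1) * ((-4)^Suc k * int (h choose Suc k))] (mod int p)" .
  show ?case
    using eq[unfolded h_def] cong_mult_lcancel[OF coprime_Suc_prime_int[OF p Suc.prems]] by blast
qed simp

lemma seq_b_pred_prime_cong:
  assumes p: "prime p" and "p > 2"
  shows "[seq_b (p - 1) = Legendre (-3) (int p)] (mod int p)"
proof -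
  define h where "h = (p - 1) div 2"
  have "odd p"
    using assms by (intro prime_odd_nat) auto
  have "[seq_b (p - 1) = (\<Sum>k=0..p-1. (-4)^k * int (h choose k))] (mod int p)"
    unfolding seq_b_def
  proof (rule cong_sum)
    fix k assume "k \<in> {0..p-1}"
    then have "k < p"
      using prime_gt_0_nat[OF p] by auto
    have "[int (p - 1 choose k)^2 = ((-1)^k)^2] (mod int p)"
      using binomial_pred_prime_cong[OF p \<open>k < p\<close>] by (rule cong_pow)
    then have "[int (p - 1 choose k)^2 = 1] (mod int p)"
      by (simp flip: power_mult add: mult.commute[of k])
    moreover have "[int (2 * k choose k) = (-4)^k * int (h choose k)] (mod int p)"
      unfolding h_def using central_binomial_cong[OF p \<open>odd p\<close> \<open>k < p\<close>] .
    ultimately show "[int (p - 1 choose k)^2 * int (2 * k choose k) = (-4)^k * int (h choose k)] (mod int p)"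
      using cong_mult by fastforce
  qed
  also have "(\<Sum>k=0..p-1. (-4)^k * int (h choose k)) = (\<Sum>k\<le>h. (-4)^k * int (h choose k))"
    unfolding atLeast0AtMost[symmetric] h_def by (intro sum.mono_neutral_right) (auto simp: binomial_eq_0)
  also have "\<dots> = (-3)^h"
    using binomial_ring[of "-4 :: int" 1 h] by (simp add: ac_simps)
  also have "[(-3)^h = Legendre (-3) (int p)] (mod int p)"
    using euler_criterion[of p "-3"] assms unfolding h_def by (simp add: cong_sym)
  finally show ?thesis .
qed

lemma Legendre_square: "\<not> [a = 0] (mod p) \<Longrightarrow> Legendre a p ^ 2 = 1"
  by (simp add: Legendre_def)

theorem apery_a_reflection_cong:
  assumes p: "prime p" and "n < p"
  shows "[apery_a n = (-1)^n * apery_a (p - 1 - n)] (mod int p)"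
proof -
  have "[apery_a 0 = 1 * apery_a (p - 1)] (mod int p)"
    using apery_a_pred_prime_cong[OF p] by (simp add: apery_a_def cong_sym)
  from apery_like_reflection_cong[OF p apery_a_apery_like this \<open>n < p\<close>] show ?thesis
    by simp
qed

theorem seq_b_reflection_cong:
  assumes p: "prime p" and "p > 3" and "n < p"
  shows "[seq_b n = Legendre (-3) (int p) * 9^n * seq_b (p - 1 - n)] (mod int p)"
proof -
  let ?L = "Legendre (-3) (int p)"
  have "\<not> [-3 = 0] (mod int p)"
    using \<open>p > 3\<close> unfolding cong_0_iff by (auto dest: zdvd_imp_le)
  then have "[seq_b 0 = ?L * ?L] (mod int p)"
    using Legendre_square[of "-3" "int p"] by (simp add: seq_b_def power2_eq_square)
  also have "[?L * ?L = ?L * seq_b (p - 1)] (mod int p)"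
    using seq_b_pred_prime_cong[OF p] \<open>p > 3\<close> by (intro cong_mult cong_refl) (simp_all add: cong_sym)
  finally have "[seq_b 0 = ?L * seq_b (p - 1)] (mod int p)" .
  from apery_like_reflection_cong[OF p seq_b_apery_like this \<open>n < p\<close>] show ?thesis
    by simp
qed

theorem mainTheorem7:
  shows "(\<forall>(p::nat) n. prime p \<longrightarrow> n \<le> p - 1 \<longrightarrow>
            [apery_a n = (-1) ^ n * apery_a (p - 1 - n)] (mod int p))
       \<and> (\<forall>(p::nat) n. prime p \<longrightarrow> p > 3 \<longrightarrow> n \<le> p - 1 \<longrightarrow>
            [seq_b n = Legendre (-3) (int p) * 9 ^ n * seq_b (p - 1 - n)] (mod int p))"
proof (intro conjI allI impI)
  fix p n :: nat
  assume "prime p" and "n \<le> p - 1"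
  then show "[apery_a n = (-1) ^ n * apery_a (p - 1 - n)] (mod int p)"
    using prime_gt_0_nat[of p] by (intro apery_a_reflection_cong) auto
next
  fix p n :: nat
  assume "prime p" and "p > 3" and "n \<le> p - 1"
  then show "[seq_b n = Legendre (-3) (int p) * 9 ^ n * seq_b (p - 1 - n)] (mod int p)"
    by (intro seq_b_reflection_cong) auto
qed

end
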